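(* Let $(J,S)$ be a homogeneous $d$-dimensional multi-time Markov renewal chain with semi-Markov kernel $q$ and $u=\sum_{n\ge0}q^{(n)}$. Then $\mathrm{dg}(u)$ is convolutionally invertible, $u=\mathbbm{I}_s+g*\mathrm{dg}(u)$, and $$g=(u-\mathbbm{I}_s)*\mathrm{dg}(u)^{(-1)}.$$
   Context: $E=\{1,\dots,s\}$; $\mathcal{M}_s(\mathbb{N}^d)$ is the set of functions $\mathbb{N}^d\to\mathbb{R}^{s\times s}$ with convolution $[A*B](k)=\sum_{l+l'=k}A(l)B(l')$, identity $\mathbbm{I}_s$ ($I_s$ at $0_d$, zero elsewhere), powers $A^{(0)}=\mathbbm{I}_s$, $A^{(n)}=A*A^{(n-1)}$, convolutional inverse $A^{(-1)}$. $\mathbb{N}^d$ has the componentwise partial order, $k<l$ meaning $k\le l$, $k\ne l$. A homogeneous $d$-dimensional multi-time Markov renewal chain is a process $(J_n,S_n)_{n\in\mathbb{N}}$, $J_n\in E$, $S_n\in\mathbb{N}^d$, $S_0=0_d$, $S_n<S_{n+1}$, with a.s. $\mathbb{P}(J_{n+1}=j,S_{n+1}-S_n=k\mid J_{0:n},S_{0:n})=q_{J_nj}(k)$, $q_{ij}(k)=\mathbb{P}(J_{n+1}=j,S_{n+1}-S_n=k\mid J_n=i)$ independent of $n$. $\mathbb{P}_i$ denotes probability given $J_0=i$. $\mathrm{dg}(u)$ is the diagonal matrix sequence with diagonal entries $u_{jj}$. For $i,j\in E$, $g_{ij}(k)=\mathbb{P}_i(S_{m_j}=k)$ where $m_j=\min\{l\ge1:J_l=j\}$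 (first hitting time of $j$; for $i=j$ the recurrence time of $j$); $g=(g_{ij})$. *)

theory Defs
  imports "HOL-Probability.Probability"
begin

text \<open>Multi-times in N^d are functions 'd => nat (d = CARD('d)), with the pointwise
  (componentwise) order from Main: k < l iff k <= l and k ~= l.
  Matrix sequences in M_s(N^d) are functions (('d => nat) => 'e => 'e => real),
  where the finite type 'e plays the role of the state space E.\<close>

type_synonym ('d, 'e) mseq = "('d \<Rightarrow> nat) \<Rightarrow> 'e \<Rightarrow> 'e \<Rightarrow> real"

definition mconv :: "('d::finite, 'e::finite) mseq \<Rightarrow> ('d, 'e) mseq \<Rightarrow> ('d, 'e) mseq" where
  "mconv A B = (\<lambda>k i j. \<Sum>l\<in>{l. l \<le> k}. \<Sum>m\<in>UNIV. A l i m * B (\<lambda>t. k t - l t) m j)"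

definition mId :: "('d::finite, 'e::finite) mseq" where
  "mId = (\<lambda>k i j. if k = (\<lambda>_. 0) \<and> i = j then 1 else 0)"

primrec mpow :: "('d::finite, 'e::finite) mseq \<Rightarrow> nat \<Rightarrow> ('d, 'e) mseq" where
  "mpow A 0 = mId"
| "mpow A (Suc n) = mconv A (mpow A n)"

definition mconv_invertible :: "('d::finite, 'e::finite) mseq \<Rightarrow> bool" where
  "mconv_invertible A \<longleftrightarrow> (\<exists>B. mconv A B = mId \<and> mconv B A = mId)"

definition mconv_inv :: "('d::finite, 'e::finite) mseq \<Rightarrow> ('d, 'e) mseq" where
  "mconv_inv A = (THE B. mconv A B = mId \<and> mconv B A = mId)"

definition mminus :: "('d, 'e) mseq \<Rightarrow> ('d, 'e) mseq \<Rightarrow> ('d, 'e) mseq" where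
  "mminus A B = (\<lambda>k i j. A k i j - B k i j)"

definition dg :: "('d, 'e) mseq \<Rightarrow> ('d, 'e) mseq" where
  "dg A = (\<lambda>k i j. if i = j then A k i j else 0)"

definition renewal_fun :: "('d::finite, 'e::finite) mseq \<Rightarrow> ('d, 'e) mseq" where
  "renewal_fun q = (\<lambda>k i j. \<Sum>n. mpow q n k i j)"

text \<open>M i is the probability space of the chain started in state i (giving P_i).
  The Markov condition (conditional probability given the whole past equals
  q_{J_n j}(k) a.s.) is stated in its elementary discrete form.\<close>
definition MRC :: "('e \<Rightarrow> 'a measure) \<Rightarrow> (nat \<Rightarrow> 'a \<Rightarrow> 'e::finite)
    \<Rightarrow> (nat \<Rightarrow> 'a \<Rightarrow> ('d::finite \<Rightarrow> nat)) \<Rightarrow> ('d, 'e) mseq \<Rightarrow> bool" where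
  "MRC M J S q \<longleftrightarrow> (\<forall>i.
     prob_space (M i) \<and>
     (\<forall>n. J n \<in> measurable (M i) (count_space UNIV)) \<and>
     (\<forall>n. S n \<in> measurable (M i) (count_space UNIV)) \<and>
     (AE \<omega> in M i. J 0 \<omega> = i) \<and>
     (AE \<omega> in M i. S 0 \<omega> = (\<lambda>_. 0)) \<and>
     (AE \<omega> in M i. \<forall>n. S n \<omega> < S (Suc n) \<omega>) \<and>
     (\<forall>n js ss j k.
        measure (M i) {\<omega> \<in> space (M i). J (Suc n) \<omega> = j \<and>
            (\<lambda>t. S (Suc n) \<omega> t - S n \<omega> t) = k \<and>
            (\<forall>m\<le>n. J m \<omega> = js m \<and> S m \<omega> = ss m)}
        = q k (js n) j * measure (M i) {\<omega> \<in> space (M i). \<forall>m\<le>n. J m \<omega> = js m \<and> S m \<omega> = ss m}))"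

text \<open>g_{ij}(k) = P_i(S_{m_j} = k), m_j = min{l >= 1. J_l = j} (event m_j < infinity implicit).\<close>
definition first_passage :: "('e \<Rightarrow> 'a measure) \<Rightarrow> (nat \<Rightarrow> 'a \<Rightarrow> 'e)
    \<Rightarrow> (nat \<Rightarrow> 'a \<Rightarrow> ('d \<Rightarrow> nat)) \<Rightarrow> ('d, 'e) mseq" where
  "first_passage M J S = (\<lambda>k i j. measure (M i) {\<omega> \<in> space (M i).
      \<exists>l\<ge>1. J l \<omega> = j \<and> (\<forall>l'. 1 \<le> l' \<and> l' < l \<longrightarrow> J l' \<omega> \<noteq> j) \<and> S l \<omega> = k})"

end

theory Submission
  imports Defs
begin

(* Since S increases strictly, the kernel q vanishes at the multi-time 0, so q^(n)(k) = 0 as soon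
   as n exceeds |k| = sum_t k t.  The renewal function u is therefore a finite sum at every k and
   satisfies u = I + q * u = I + u * q.  Any D with D(0) = I_s is then invertible, its inverse being
   the renewal function of I - D; in particular dg(u) is invertible, as u(0) = I_s.

   On the probabilistic side q^(n)_ij(k) = P_i(J_n = j, S_n = k).  Splitting this event according
   to the first step l >= 1 at which the chain is in j and applying the Markov property at step l
   gives
     P_i(J_n = j, S_n = k) = sum_(l,x) P_i(m_j = l, S_l = x) P_j(J_(n-l) = j, S_(n-l) = k - x),
   and summing over n yields u = I + g * dg(u), which is solved for g with the inverse of dg(u). *)

section \<open>Multi-times\<close>

abbreviation mt_norm :: "('d::finite \<Rightarrow> nat) \<Rightarrow> nat" where
  "mt_norm k \<equiv> \<Sum>t\<in>UNIV. k t"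

lemma finite_Collect_le_fun: "finite {l::'d::finite \<Rightarrow> nat. l \<le> k}"
proof (rule finite_subset)
  show "{l. l \<le> k} \<subseteq> PiE UNIV (\<lambda>t. {..k t})"
    by (auto simp: le_fun_def PiE_def extensional_def)
qed (simp add: finite_PiE)

lemma mt_norm_mono: "l \<le> k \<Longrightarrow> mt_norm l \<le> mt_norm k"
  by (intro sum_mono) (simp add: le_fun_def)

lemma mt_norm_strict_mono: "l < k \<Longrightarrow> mt_norm l < mt_norm (k::'d::finite \<Rightarrow> nat)"
  by (intro sum_strict_mono_ex1) (auto simp: less_fun_def le_fun_def not_le)

lemma mt_norm_diff: "l \<le> k \<Longrightarrow> mt_norm (k - l) = mt_norm k - mt_norm l"
  by (simp add: le_fun_def sum_subtractf_nat)

lemma mt_norm_pos: "l \<noteq> (\<lambda>_. 0) \<Longrightarrow> 0 < mt_norm l"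
  by (auto simp: fun_eq_iff intro: sum_pos2)

lemma fun_diff_zero [simp]: "k - (\<lambda>_. 0) = (k :: 'a \<Rightarrow> 'b::cancel_comm_monoid_add)"
  by (simp add: fun_eq_iff)

lemma fun_diff_self: "k - k = (\<lambda>_. 0 :: 'b::cancel_comm_monoid_add)"
  by (simp add: fun_eq_iff)

lemma diff_eq_0_fun_iff: "l \<le> k \<Longrightarrow> k - l = (\<lambda>_. 0) \<longleftrightarrow> l = (k::'d \<Rightarrow> nat)"
  by (auto simp: fun_eq_iff le_fun_def intro: antisym)

lemma sum_Collect_le_fun_shift:
  fixes a k :: "'d::finite \<Rightarrow> nat"
  assumes "a \<le> k"
  shows "(\<Sum>x\<in>{x. a \<le> x \<and> x \<le> k}. f (x - a) (k - x)) = (\<Sum>y\<in>{y. y \<le> k - a}. f y (k - a - y))"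
proof (rule sum.reindex_bij_witness[where i = "\<lambda>y t. y t + a t" and j = "\<lambda>x. x - a"])
  fix x assume x: "x \<in> {x. a \<le> x \<and> x \<le> k}"
  then show "(\<lambda>t. (x - a) t + a t) = x" "x - a \<in> {y. y \<le> k - a}"
    by (auto simp: le_fun_def fun_eq_iff diff_le_mono)
  from x have "k - a - (x - a) = k - x"
    by (auto simp: le_fun_def fun_eq_iff)
  then show "f (x - a) (k - a - (x - a)) = f (x - a) (k - x)" by simp
next
  fix y assume y: "y \<in> {y. y \<le> k - a}"
  show "(\<lambda>t. y t + a t) - a = y"
    by (simp add: fun_eq_iff)
  have "y t + a t \<le> k t" for t
    using le_funD[of y "k - a" t] le_funD[OF assms, of t] y by simp
  then show "(\<lambda>t. y t + a t) \<in> {x. a \<le> x \<and> x \<le> k}"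
    by (simp add: le_fun_def)
qed

lemma sum_triangle_reindex:
  fixes f :: "nat \<Rightarrow> nat \<Rightarrow> 'a::comm_monoid_add"
  assumes vanish: "\<And>l r. N < l + r \<Longrightarrow> f l r = 0"
  shows "(\<Sum>n=1..N. \<Sum>l=1..n. f l (n - l)) = (\<Sum>l=1..N. \<Sum>r\<le>N. f l r)"
proof -
  have "(\<Sum>r\<le>N. f l r) = (\<Sum>n\<in>{n\<in>{1..N}. l \<le> n}. f l (n - l))" if l: "l \<in> {1..N}" for l
  proof -
    have "(\<Sum>r\<le>N. f l r) = (\<Sum>r\<le>N - l. f l r)"
      by (rule sum.mono_neutral_right) (use l in \<open>auto intro!: vanish\<close>)
    also have "\<dots> = (\<Sum>n\<in>{n\<in>{1..N}. l \<le> n}. f l (n - l))"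
      by (rule sum.reindex_bij_witness[where i = "\<lambda>n. n - l" and j = "\<lambda>r. r + l"]) (use l in auto)
    finally show ?thesis .
  qed
  then have "(\<Sum>l=1..N. \<Sum>r\<le>N. f l r) = (\<Sum>l=1..N. \<Sum>n\<in>{n\<in>{1..N}. l \<le> n}. f l (n - l))"
    by (rule sum.cong[OF refl])
  also have "\<dots> = (\<Sum>n=1..N. \<Sum>l\<in>{l\<in>{1..N}. l \<le> n}. f l (n - l))"
    by (rule sum.swap_restrict) auto
  also have "\<dots> = (\<Sum>n=1..N. \<Sum>l=1..n. f l (n - l))"
    by (rule sum.cong[OF refl], rule sum.cong) auto
  finally show ?thesis ..
qed

section \<open>Convolution of matrix sequences\<close>

lemma mconv_apply:
  "mconv A B k i j = (\<Sum>l\<in>{l. l \<le> k}. \<Sum>m\<in>UNIV. A l i m * B (k - l) m j)"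
  by (simp add: mconv_def fun_diff_def)

lemma mconv_mId_left [simp]: "mconv mId B = B"
proof (intro ext)
  fix k i j
  have "mconv mId B k i j = (\<Sum>l\<in>{l. l \<le> k}. if l = (\<lambda>_. 0) then B (k - l) i j else 0)"
    unfolding mconv_apply mId_def by (rule sum.cong[OF refl]) (simp add: of_bool_def[symmetric])
  also have "\<dots> = B k i j"
    by (subst sum.delta[OF finite_Collect_le_fun]) (simp add: le_fun_def)
  finally show "mconv mId B k i j = B k i j" .
qed

lemma mconv_mId_right [simp]: "mconv A mId = A"
proof (intro ext)
  fix k i j
  have "mconv A mId k i j = (\<Sum>l\<in>{l. l \<le> k}. if l = k then A l i j else 0)"
    unfolding mconv_apply mId_def
    by (rule sum.cong[OF refl]) (simp add: diff_eq_0_fun_iff if_distrib[of "\<lambda>x. _ * x"] cong: if_cong)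
  also have "\<dots> = A k i j"
    by (simp add: finite_Collect_le_fun)
  finally show "mconv A mId k i j = A k i j" .
qed

lemma mconv_assoc: "mconv (mconv A B) C = mconv A (mconv B C)"
proof (intro ext)
  fix k i j
  define F where "F a y z = (\<Sum>p\<in>UNIV. \<Sum>m\<in>UNIV. A a i p * B y p m * C z m j)" for a y z
  have "mconv (mconv A B) C k i j = (\<Sum>x\<in>{x. x \<le> k}. \<Sum>a\<in>{a. a \<le> x}. F a (x - a) (k - x))"
    unfolding mconv_apply F_def sum_distrib_right
    by (rule sum.cong[OF refl], subst sum.swap, rule sum.cong[OF refl], rule sum.swap)
  also have "\<dots> = (\<Sum>x\<in>{x. x \<le> k}. \<Sum>a\<in>{a \<in> {a. a \<le> k}. a \<le> x}. F a (x - a) (k - x))"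
    by (rule sum.cong[OF refl], rule sum.cong) (auto intro: order_trans)
  also have "\<dots> = (\<Sum>a\<in>{a. a \<le> k}. \<Sum>x\<in>{x \<in> {x. x \<le> k}. a \<le> x}. F a (x - a) (k - x))"
    by (rule sum.swap_restrict) (simp_all add: finite_Collect_le_fun)
  also have "\<dots> = (\<Sum>a\<in>{a. a \<le> k}. \<Sum>y\<in>{y. y \<le> k - a}. F a y (k - a - y))"
  proof (rule sum.cong[OF refl])
    fix a assume "a \<in> {a. a \<le> k}"
    then show "(\<Sum>x\<in>{x \<in> {x. x \<le> k}. a \<le> x}. F a (x - a) (k - x)) = (\<Sum>y\<in>{y. y \<le> k - a}. F a y (k - a - y))"
      using sum_Collect_le_fun_shift[of a k "F a"] by (simp add: conj_commute)
  qed
  also have "\<dots> = mconv A (mconv B C) k i j"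
    unfolding mconv_apply F_def
  proof (rule sum.cong[OF refl])
    fix a
    show "(\<Sum>y\<in>{y. y \<le> k - a}. \<Sum>p\<in>UNIV. \<Sum>m\<in>UNIV. A a i p * B y p m * C (k - a - y) m j)
      = (\<Sum>p\<in>UNIV. A a i p * (\<Sum>l\<in>{l. l \<le> k - a}. \<Sum>m\<in>UNIV. B l p m * C (k - a - l) m j))"
      by (simp add: sum.swap[of _ UNIV "{y. y \<le> k - a}"] sum_distrib_left mult.assoc)
  qed
  finally show "mconv (mconv A B) C k i j = mconv A (mconv B C) k i j" .
qed

lemma mconv_sum_left:
  "finite N \<Longrightarrow> mconv (\<lambda>k i j. \<Sum>n\<in>N. B n k i j) A k i j = (\<Sum>n\<in>N. mconv (B n) A k i j)"
  unfolding mconv_apply by (simp add: sum_distrib_right sum.swap[of _ N])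

lemma mconv_sum_right:
  "finite N \<Longrightarrow> mconv A (\<lambda>k i j. \<Sum>n\<in>N. B n k i j) k i j = (\<Sum>n\<in>N. mconv A (B n) k i j)"
  unfolding mconv_apply by (simp add: sum_distrib_left sum.swap[of _ N])

lemma mconv_mminus_left: "mconv (mminus A B) C = mminus (mconv A C) (mconv B C)"
  unfolding mconv_def mminus_def by (intro ext) (simp add: left_diff_distrib sum_subtractf)

lemma mconv_mminus_right: "mconv C (mminus A B) = mminus (mconv C A) (mconv C B)"
  unfolding mconv_def mminus_def by (intro ext) (simp add: right_diff_distrib sum_subtractf)

lemma mconv_cong_left: "(\<And>l. l \<le> k \<Longrightarrow> A l = A' l) \<Longrightarrow> mconv A B k = mconv A' B k"
  unfolding mconv_apply by (intro ext sum.cong refl) simp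

lemma mconv_cong_right: "(\<And>l. l \<le> k \<Longrightarrow> B l = B' l) \<Longrightarrow> mconv A B k = mconv A B' k"
  unfolding mconv_apply by (intro ext sum.cong refl) (simp add: le_fun_def)

lemma mconv_dg_right: "mconv A (dg B) k i j = (\<Sum>l\<in>{l. l \<le> k}. A l i j * B (k - l) j j)"
  unfolding mconv_apply dg_def by (simp add: if_distrib[of "\<lambda>x. _ * x"] cong: if_cong)

lemma mpow_Suc_right: "mpow A (Suc n) = mconv (mpow A n) A"
proof (induction n)
  case (Suc n)
  then show ?case by (metis mconv_assoc mpow.simps(2))
qed simp

section \<open>Renewal functions and convolutional inverses\<close>

lemma mpow_eq_0_if_mt_norm_less:
  assumes A0: "A (\<lambda>_. 0) = (\<lambda>_ _. 0)"
  shows "mt_norm k < n \<Longrightarrow> mpow A n k i j = 0"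
proof (induction n arbitrary: k i j)
  case (Suc n)
  have "A l i m * mpow A n (k - l) m j = 0" if "l \<le> k" for l m
  proof (cases "l = (\<lambda>_. 0)")
    case False
    then have "mt_norm (k - l) < n"
      using mt_norm_pos mt_norm_diff[OF that] mt_norm_mono[OF that] Suc.prems by fastforce
    then show ?thesis by (simp add: Suc.IH)
  qed (simp add: A0)
  then show ?case by (auto simp: mconv_apply intro!: sum.neutral)
qed simp

lemma renewal_fun_eq_sum:
  assumes "A (\<lambda>_. 0) = (\<lambda>_ _. 0)" "mt_norm k < N"
  shows "renewal_fun A k i j = (\<Sum>n<N. mpow A n k i j)"
  unfolding renewal_fun_def
  by (rule suminf_finite) (use assms mpow_eq_0_if_mt_norm_less[of A] in auto)

lemma renewal_fun_unfold_left:
  fixes A :: "('d::finite, 'e::finite) mseq"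
  assumes A0: "A (\<lambda>_. 0) = (\<lambda>_ _. 0)"
  shows "renewal_fun A k i j = mId k i j + mconv A (renewal_fun A) k i j"
proof -
  define N where "N = Suc (mt_norm k)"
  define U where "U = (\<lambda>k i j. \<Sum>n<N. mpow A n k i j)"
  have "renewal_fun A k i j = (\<Sum>n<Suc N. mpow A n k i j)"
    by (rule renewal_fun_eq_sum[of A, OF A0]) (simp add: N_def)
  also have "\<dots> = mId k i j + mconv A U k i j"
    by (subst sum.lessThan_Suc_shift) (simp add: U_def mconv_sum_right)
  also have "mconv A U k = mconv A (renewal_fun A) k"
  proof (rule mconv_cong_right)
    fix l assume "l \<le> k"
    then have "mt_norm l < N"
      using mt_norm_mono[of l k] by (simp add: N_def)
    then show "U l = renewal_fun A l"
      unfolding U_def by (intro ext) (rule renewal_fun_eq_sum[of A, OF A0, symmetric])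
  qed
  finally show ?thesis .
qed

lemma renewal_fun_unfold_right:
  fixes A :: "('d::finite, 'e::finite) mseq"
  assumes A0: "A (\<lambda>_. 0) = (\<lambda>_ _. 0)"
  shows "renewal_fun A k i j = mId k i j + mconv (renewal_fun A) A k i j"
proof -
  define N where "N = Suc (mt_norm k)"
  define U where "U = (\<lambda>k i j. \<Sum>n<N. mpow A n k i j)"
  have "renewal_fun A k i j = (\<Sum>n<Suc N. mpow A n k i j)"
    by (rule renewal_fun_eq_sum[of A, OF A0]) (simp add: N_def)
  also have "\<dots> = mId k i j + mconv U A k i j"
    by (subst sum.lessThan_Suc_shift) (simp add: U_def mconv_sum_left mpow_Suc_right del: mpow.simps(2))
  also have "mconv U A k = mconv (renewal_fun A) A k"
  proof (rule mconv_cong_left)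
    fix l assume "l \<le> k"
    then have "mt_norm l < N"
      using mt_norm_mono[of l k] by (simp add: N_def)
    then show "U l = renewal_fun A l"
      unfolding U_def by (intro ext) (rule renewal_fun_eq_sum[of A, OF A0, symmetric])
  qed
  finally show ?thesis .
qed

lemma mconv_inverse_unique:
  assumes "mconv B D = mId" "mconv D B' = mId"
  shows "B = B'"
proof -
  have "B = mconv (mconv B D) B'"
    using assms(2) by (simp add: mconv_assoc)
  with assms(1) show ?thesis by simp
qed

lemma mconv_inv:
  assumes "mconv_invertible D"
  shows "mconv D (mconv_inv D) = mId" "mconv (mconv_inv D) D = mId"
proof -
  from assms obtain B where B: "mconv D B = mId \<and> mconv B D = mId"
    unfolding mconv_invertible_def by blast
  have "mconv D (mconv_inv D) = mId \<and> mconv (mconv_inv D) D = mId"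
    unfolding mconv_inv_def
  proof (rule theI[of _ B])
    fix B' assume "mconv D B' = mId \<and> mconv B' D = mId"
    with B show "B' = B" by (blast intro: mconv_inverse_unique)
  qed (rule B)
  then show "mconv D (mconv_inv D) = mId" "mconv (mconv_inv D) D = mId" by auto
qed

lemma mconv_invertible_if_unit_at_0:
  fixes D :: "('d::finite, 'e::finite) mseq"
  assumes "D (\<lambda>_. 0) = mId (\<lambda>_::'d. 0)"
  shows "mconv_invertible D"
proof -
  define N where "N = mminus mId D"
  have N0: "N (\<lambda>_. 0) = (\<lambda>_ _. 0)"
    using assms by (simp add: N_def mminus_def)
  have D: "D = mminus mId N"
    by (simp add: N_def mminus_def)
  have "mconv D (renewal_fun N) = mId"
    unfolding D mconv_mminus_left mconv_mId_left
    by (intro ext) (simp add: mminus_def renewal_fun_unfold_left[of N, OF N0])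
  moreover have "mconv (renewal_fun N) D = mId"
    unfolding D mconv_mminus_right mconv_mId_right
    by (intro ext) (simp add: mminus_def renewal_fun_unfold_right[of N, OF N0])
  ultimately show ?thesis
    unfolding mconv_invertible_def by blast
qed

lemma eq_mconv_inv_if_mconv_eq:
  assumes "mconv G D = X" "mconv_invertible D"
  shows "G = mconv X (mconv_inv D)"
proof -
  have "G = mconv G (mconv D (mconv_inv D))"
    by (simp add: mconv_inv[OF assms(2)])
  also have "\<dots> = mconv X (mconv_inv D)"
    by (simp add: mconv_assoc[symmetric] assms(1))
  finally show ?thesis .
qed

section \<open>Markov renewal chains\<close>

lemma (in finite_measure) measure_eq_sum_AE_partition:
  assumes "finite I" "\<And>h. h \<in> I \<Longrightarrow> C h \<in> sets M" "disjoint_family_on C I"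
    and "\<And>h. h \<in> I \<Longrightarrow> C h \<subseteq> A" "A \<in> sets M"
    and "AE \<omega> in M. \<omega> \<in> A \<longrightarrow> (\<exists>h\<in>I. \<omega> \<in> C h)"
  shows "measure M A = (\<Sum>h\<in>I. measure M (C h))"
proof -
  have "AE \<omega> in M. \<omega> \<in> A \<longleftrightarrow> \<omega> \<in> (\<Union>h\<in>I. C h)"
    using assms(6) by eventually_elim (use assms(4) in blast)
  then have "measure M A = measure M (\<Union>h\<in>I. C h)"
    by (rule measure_eq_AE) (use assms in auto)
  also have "\<dots> = (\<Sum>h\<in>I. measure M (C h))"
    by (rule finite_measure_finite_Union) (use assms in auto)
  finally show ?thesis .
qed

lemma measure_eq_0_if_AE_notin:
  assumes "A \<in> sets M" "AE \<omega> in M. \<omega> \<notin> A"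
  shows "measure M A = 0"
  using assms by (simp add: AE_iff_null_sets[symmetric] measure_def null_setsD1)

locale markov_renewal_chain =
  fixes M :: "'e::finite \<Rightarrow> 'a measure" and J :: "nat \<Rightarrow> 'a \<Rightarrow> 'e"
    and S :: "nat \<Rightarrow> 'a \<Rightarrow> ('d::finite \<Rightarrow> nat)" and q :: "('d, 'e) mseq"
  assumes mrc: "MRC M J S q"
begin

lemma prob_space_M: "prob_space (M i)"
  using mrc unfolding MRC_def by blast

lemma finite_measure_M: "finite_measure (M i)"
  using prob_space_M by (rule prob_space.axioms(1))

lemma measurable_J [measurable]: "J n \<in> M i \<rightarrow>\<^sub>M count_space UNIV"
  using mrc unfolding MRC_def by blast

lemma measurable_S [measurable]: "S n \<in> M i \<rightarrow>\<^sub>M count_space UNIV"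
  using mrc unfolding MRC_def by blast

lemma measurable_S_increment [measurable]:
  "(\<lambda>\<omega>. S (Suc n) \<omega> - S n \<omega>) \<in> M i \<rightarrow>\<^sub>M count_space UNIV"
proof -
  have "(\<lambda>\<omega>. (\<lambda>b. b - S n \<omega>) (S (Suc n) \<omega>)) \<in> M i \<rightarrow>\<^sub>M count_space UNIV"
  proof (rule measurable_compose_countable[where g = "S (Suc n)"])
    fix b :: "'d \<Rightarrow> nat"
    show "(\<lambda>\<omega>. b - S n \<omega>) \<in> M i \<rightarrow>\<^sub>M count_space UNIV"
      using measurable_compose_countable[where f = "\<lambda>c \<omega>. b - c" and g = "S n"] by simp
  qed simp
  then show ?thesis by simp
qed

lemma AE_start: "AE \<omega> in M i. J 0 \<omega> = i \<and> S 0 \<omega> = (\<lambda>_. 0)"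
  using mrc unfolding MRC_def by auto

lemma AE_strict_mono_S: "AE \<omega> in M i. strict_mono (\<lambda>n. S n \<omega>)"
  using mrc unfolding MRC_def strict_mono_Suc_iff by blast

lemma AE_mono_S: "AE \<omega> in M i. mono (\<lambda>n. S n \<omega>)"
  using AE_strict_mono_S by eventually_elim (rule strict_mono_mono)

lemma AE_le_mt_norm_S: "AE \<omega> in M i. \<forall>n. n \<le> mt_norm (S n \<omega>)"
  using AE_strict_mono_S
proof eventually_elim
  case (elim \<omega>)
  then have "strict_mono (\<lambda>n. mt_norm (S n \<omega>))"
    by (auto simp: strict_mono_def intro: mt_norm_strict_mono)
  then show ?case
    using strict_mono_imp_increasing[of "\<lambda>n. mt_norm (S n \<omega>)"] by simp
qed

definition visit :: "'e \<Rightarrow> nat \<Rightarrow> 'e \<Rightarrow> ('d \<Rightarrow> nat) \<Rightarrow> 'a set" where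
  "visit i n j k = {\<omega> \<in> space (M i). J n \<omega> = j \<and> S n \<omega> = k}"

definition history :: "'e \<Rightarrow> nat \<Rightarrow> (nat \<Rightarrow> 'e) \<Rightarrow> (nat \<Rightarrow> 'd \<Rightarrow> nat) \<Rightarrow> 'a set" where
  "history i p js ss = {\<omega> \<in> space (M i). \<forall>m\<le>p. J m \<omega> = js m \<and> S m \<omega> = ss m}"

text \<open>Events determined by \<open>(J m, S m)\<close> for \<open>m \<le> p\<close>: as states and times range over countable
  sets, these form the \<open>p\<close>-th \<open>\<sigma>\<close>-algebra of the natural filtration.\<close>
definition past_event :: "'e \<Rightarrow> nat \<Rightarrow> 'a set \<Rightarrow> bool" where
  "past_event i p E \<longleftrightarrow> E \<in> sets (M i) \<and> (\<forall>\<omega>\<in>space (M i). \<forall>\<omega>'\<in>space (M i).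
     (\<forall>m\<le>p. J m \<omega> = J m \<omega>' \<and> S m \<omega> = S m \<omega>') \<longrightarrow> (\<omega> \<in> E \<longleftrightarrow> \<omega>' \<in> E))"

lemma sets_visit [measurable]: "visit i n j k \<in> sets (M i)"
  unfolding visit_def by measurable

lemma sets_history [measurable]: "history i p js ss \<in> sets (M i)"
  unfolding history_def by measurable

lemma sets_past_event: "past_event i p E \<Longrightarrow> E \<in> sets (M i)"
  unfolding past_event_def by blast

lemma past_event_mono: "past_event i p E \<Longrightarrow> p \<le> p' \<Longrightarrow> past_event i p' E"
  unfolding past_event_def by (blast dest: le_trans)

lemma past_event_visit: "past_event i n (visit i n j k)"
  unfolding past_event_def visit_def by auto

lemma history_subset_or_disjoint:
  assumes "past_event i p E"
  shows "history i p js ss \<subseteq> E \<or> history i p js ss \<inter> E = {}"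
proof (rule disjCI)
  assume "history i p js ss \<inter> E \<noteq> {}"
  then obtain \<omega>\<^sub>0 where \<omega>\<^sub>0: "\<omega>\<^sub>0 \<in> history i p js ss" "\<omega>\<^sub>0 \<in> E"
    by blast
  show "history i p js ss \<subseteq> E"
  proof
    fix \<omega> assume "\<omega> \<in> history i p js ss"
    with \<omega>\<^sub>0(1) have "\<omega> \<in> space (M i)" "\<omega>\<^sub>0 \<in> space (M i)"
      "\<forall>m\<le>p. J m \<omega>\<^sub>0 = J m \<omega> \<and> S m \<omega>\<^sub>0 = S m \<omega>"
      by (simp_all add: history_def)
    with assms \<omega>\<^sub>0(2) show "\<omega> \<in> E"
      unfolding past_event_def by blast
  qed
qed

lemma markov_step:
  "measure (M i) (history i p js ss \<inter> visit i (Suc p) j K) =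
     (if ss p \<le> K then q (K - ss p) (js p) j else 0) * measure (M i) (history i p js ss)"
proof (cases "ss p \<le> K")
  case True
  have "AE \<omega> in M i. \<omega> \<in> history i p js ss \<inter> visit i (Suc p) j K \<longleftrightarrow>
      \<omega> \<in> {\<omega> \<in> space (M i). J (Suc p) \<omega> = j \<and> S (Suc p) \<omega> - S p \<omega> = K - ss p \<and>
        (\<forall>m\<le>p. J m \<omega> = js m \<and> S m \<omega> = ss m)}"
    using AE_mono_S
  proof eventually_elim
    case (elim \<omega>)
    then have "S p \<omega> \<le> S (Suc p) \<omega>" by (simp add: mono_def)
    with True show ?case
      by (auto simp: history_def visit_def fun_eq_iff le_fun_def eq_diff_iff)
  qed
  then have "measure (M i) (history i p js ss \<inter> visit i (Suc p) j K) =
      measure (M i) {\<omega> \<in> space (M i). J (Suc p) \<omega> = j \<and> S (Suc p) \<omega> - S p \<omega> = K - ss p \<and>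
        (\<forall>m\<le>p. J m \<omega> = js m \<and> S m \<omega> = ss m)}"
    by (rule measure_eq_AE) measurable
  also have "\<dots> = q (K - ss p) (js p) j * measure (M i) (history i p js ss)"
    using mrc unfolding MRC_def history_def fun_diff_def by blast
  finally show ?thesis using True by simp
next
  case False
  have "AE \<omega> in M i. \<omega> \<notin> history i p js ss \<inter> visit i (Suc p) j K"
    using AE_mono_S
  proof eventually_elim
    case (elim \<omega>)
    then have "S p \<omega> \<le> S (Suc p) \<omega>" by (simp add: mono_def)
    with False show ?case by (auto simp: history_def visit_def)
  qed
  then show ?thesis
    using False by (simp add: measure_eq_0_if_AE_notin)
qed

lemma disjoint_family_on_history:
  fixes B :: "('d \<Rightarrow> nat) set"
  shows "disjoint_family_on (\<lambda>h. history i p (fst h) (snd h)) (({..p} \<rightarrow>\<^sub>E UNIV) \<times> ({..p} \<rightarrow>\<^sub>E B))"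
  unfolding disjoint_family_on_def
proof (intro ballI impI)
  fix h h' :: "(nat \<Rightarrow> 'e) \<times> (nat \<Rightarrow> 'd \<Rightarrow> nat)"
  assume h: "h \<in> ({..p} \<rightarrow>\<^sub>E UNIV) \<times> ({..p} \<rightarrow>\<^sub>E B)" "h' \<in> ({..p} \<rightarrow>\<^sub>E UNIV) \<times> ({..p} \<rightarrow>\<^sub>E B)"
    and "h \<noteq> h'"
  show "history i p (fst h) (snd h) \<inter> history i p (fst h') (snd h') = {}"
  proof (rule ccontr)
    assume "history i p (fst h) (snd h) \<inter> history i p (fst h') (snd h') \<noteq> {}"
    then obtain \<omega> where \<omega>: "\<omega> \<in> history i p (fst h) (snd h)" "\<omega> \<in> history i p (fst h') (snd h')"
      by blast
    have "fst h m = fst h' m \<and> snd h m = snd h' m" if "m \<in> {..p}" for m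
      using \<omega> that by (simp add: history_def)
    moreover have "fst h \<in> extensional {..p}" "fst h' \<in> extensional {..p}"
      "snd h \<in> extensional {..p}" "snd h' \<in> extensional {..p}"
      using h by (simp_all add: mem_Times_iff PiE_iff)
    ultimately have "fst h = fst h'" "snd h = snd h'"
      by (auto intro: extensionalityI[of _ "{..p}"])
    then show False using \<open>h \<noteq> h'\<close> by (simp add: prod_eq_iff)
  qed
qed

lemma AE_visit_imp_history:
  "AE \<omega> in M i. \<omega> \<in> visit i p m y \<longrightarrow>
     (\<exists>h\<in>({..p} \<rightarrow>\<^sub>E UNIV) \<times> ({..p} \<rightarrow>\<^sub>E {z. z \<le> y}). \<omega> \<in> history i p (fst h) (snd h))"
  using AE_mono_S
proof eventually_elim
  case (elim \<omega>)
  show ?case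
  proof
    assume \<omega>: "\<omega> \<in> visit i p m y"
    let ?h = "(restrict (\<lambda>m. J m \<omega>) {..p}, restrict (\<lambda>m. S m \<omega>) {..p})"
    have "?h \<in> ({..p} \<rightarrow>\<^sub>E UNIV) \<times> ({..p} \<rightarrow>\<^sub>E {z. z \<le> y})"
      using elim \<omega> by (auto simp: visit_def mono_def)
    moreover have "\<omega> \<in> history i p (fst ?h) (snd ?h)"
      using \<omega> by (simp add: visit_def history_def)
    ultimately show "\<exists>h\<in>({..p} \<rightarrow>\<^sub>E UNIV) \<times> ({..p} \<rightarrow>\<^sub>E {z. z \<le> y}). \<omega> \<in> history i p (fst h) (snd h)"
      by blast
  qed
qed

text \<open>A past event meets a history either in the whole history or not at all, so the Markov
  condition, which is stated for histories only, extends to past events.\<close>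
lemma measure_past_visit_Suc:
  assumes E: "past_event i p E"
  shows "measure (M i) (E \<inter> visit i p m y \<inter> visit i (Suc p) j K) =
    (if y \<le> K then q (K - y) m j else 0) * measure (M i) (E \<inter> visit i p m y)"
proof -
  define I where "I = ({..p} \<rightarrow>\<^sub>E (UNIV :: 'e set)) \<times> ({..p} \<rightarrow>\<^sub>E {z. z \<le> y})"
  define H where "H h = history i p (fst h) (snd h)" for h
  have partition: "measure (M i) (E \<inter> visit i p m y \<inter> X) = (\<Sum>h\<in>I. measure (M i) (E \<inter> visit i p m y \<inter> X \<inter> H h))"
    if "X \<in> sets (M i)" for X
  proof (rule finite_measure.measure_eq_sum_AE_partition[OF finite_measure_M])
    show "finite I"
      unfolding I_def by (intro finite_cartesian_product finite_PiE) (auto simp: finite_Collect_le_fun)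
    show "disjoint_family_on (\<lambda>h. E \<inter> visit i p m y \<inter> X \<inter> H h) I"
      using disjoint_family_on_history unfolding I_def H_def disjoint_family_on_def by blast
    show "AE \<omega> in M i. \<omega> \<in> E \<inter> visit i p m y \<inter> X \<longrightarrow> (\<exists>h\<in>I. \<omega> \<in> E \<inter> visit i p m y \<inter> X \<inter> H h)"
      using AE_visit_imp_history[of i p m y] unfolding I_def H_def by eventually_elim blast
  qed (use sets_past_event[OF E] that in \<open>auto simp: H_def\<close>)
  have on_history: "E \<inter> visit i p m y \<inter> H h = (if fst h p = m \<and> snd h p = y \<and> H h \<subseteq> E then H h else {})" for h
    using history_subset_or_disjoint[OF E, of "fst h" "snd h"]
    by (auto simp: H_def history_def visit_def)
  have "measure (M i) (E \<inter> visit i p m y \<inter> visit i (Suc p) j K) =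
      (\<Sum>h\<in>I. measure (M i) (E \<inter> visit i p m y \<inter> H h \<inter> visit i (Suc p) j K))"
    using partition[of "visit i (Suc p) j K"] by (simp add: Int_ac)
  also have "\<dots> = (\<Sum>h\<in>I. (if y \<le> K then q (K - y) m j else 0) * measure (M i) (E \<inter> visit i p m y \<inter> H h))"
    unfolding on_history by (intro sum.cong refl) (simp add: H_def markov_step)
  also have "\<dots> = (if y \<le> K then q (K - y) m j else 0) * measure (M i) (E \<inter> visit i p m y)"
  proof -
    have "E \<inter> visit i p m y \<inter> space (M i) = E \<inter> visit i p m y"
      by (auto simp: visit_def)
    then show ?thesis
      using partition[of "space (M i)"] by (simp add: sum_distrib_left)
  qed
  finally show ?thesis .
qed

lemma measure_past_Int_visit_Suc:
  assumes E: "past_event i p E"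
  shows "measure (M i) (E \<inter> visit i (Suc p) j K) =
    (\<Sum>m\<in>UNIV. \<Sum>y\<in>{y. y \<le> K}. q (K - y) m j * measure (M i) (E \<inter> visit i p m y))"
proof -
  define C where "C h = E \<inter> visit i p (fst h) (snd h) \<inter> visit i (Suc p) j K" for h
  have "measure (M i) (E \<inter> visit i (Suc p) j K) = (\<Sum>h\<in>UNIV \<times> {y. y \<le> K}. measure (M i) (C h))"
  proof (rule finite_measure.measure_eq_sum_AE_partition[OF finite_measure_M])
    show "disjoint_family_on C (UNIV \<times> {y. y \<le> K})"
      unfolding disjoint_family_on_def C_def visit_def by (auto simp: prod_eq_iff)
    show "AE \<omega> in M i. \<omega> \<in> E \<inter> visit i (Suc p) j K \<longrightarrow> (\<exists>h\<in>UNIV \<times> {y. y \<le> K}. \<omega> \<in> C h)"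
      using AE_mono_S
    proof eventually_elim
      case (elim \<omega>)
      then have "S p \<omega> \<le> S (Suc p) \<omega>" by (simp add: mono_def)
      then show ?case
        by (intro impI bexI[of _ "(J p \<omega>, S p \<omega>)"]) (auto simp: C_def visit_def)
    qed
  qed (use sets_past_event[OF E] in \<open>auto simp: C_def finite_Collect_le_fun\<close>)
  also have "\<dots> = (\<Sum>m\<in>UNIV. \<Sum>y\<in>{y. y \<le> K}. measure (M i) (C (m, y)))"
    by (simp add: sum.cartesian_product)
  also have "\<dots> = (\<Sum>m\<in>UNIV. \<Sum>y\<in>{y. y \<le> K}. q (K - y) m j * measure (M i) (E \<inter> visit i p m y))"
    unfolding C_def using measure_past_visit_Suc[OF E] by (intro sum.cong refl) simp
  finally show ?thesis .
qed

lemma measure_visit_0: "measure (M i) (visit i 0 j k) = mId k i j"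
proof -
  have "AE \<omega> in M i. \<omega> \<in> visit i 0 j k \<longleftrightarrow> \<omega> \<in> (if j = i \<and> k = (\<lambda>_. 0) then space (M i) else {})"
    using AE_start by eventually_elim (auto simp: visit_def)
  then have "measure (M i) (visit i 0 j k) = measure (M i) (if j = i \<and> k = (\<lambda>_. 0) then space (M i) else {})"
    by (rule measure_eq_AE) auto
  then show ?thesis
    using prob_space.prob_space[OF prob_space_M] by (auto simp: mId_def)
qed

lemma kernel_at_0_eq_0: "q (\<lambda>_. 0) = (\<lambda>_ _. 0)"
proof (intro ext)
  fix i j
  have start: "history i 0 (\<lambda>_. i) (\<lambda>_ _. 0) = visit i 0 i (\<lambda>_. 0)"
    by (auto simp: history_def visit_def)
  have "AE \<omega> in M i. \<omega> \<notin> history i 0 (\<lambda>_. i) (\<lambda>_ _. 0) \<inter> visit i (Suc 0) j (\<lambda>_. 0)"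
    using AE_strict_mono_S
  proof eventually_elim
    case (elim \<omega>)
    then have "S 0 \<omega> < S (Suc 0) \<omega>" by (simp add: strict_mono_def)
    then show ?case by (auto simp: history_def visit_def)
  qed
  then have "measure (M i) (history i 0 (\<lambda>_. i) (\<lambda>_ _. 0) \<inter> visit i (Suc 0) j (\<lambda>_. 0)) = 0"
    by (simp add: measure_eq_0_if_AE_notin)
  then show "q (\<lambda>_. 0) i j = 0"
    using markov_step[of i 0 "\<lambda>_. i" "\<lambda>_ _. 0" j "\<lambda>_. 0"] by (simp add: start measure_visit_0 mId_def)
qed

lemma measure_Int_visit_eq_0_if_not_le:
  assumes "E \<subseteq> visit i l a s" "E \<in> sets (M i)" "\<not> s \<le> K"
  shows "measure (M i) (E \<inter> visit i (l + n) j K) = 0"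
proof (rule measure_eq_0_if_AE_notin)
  show "AE \<omega> in M i. \<omega> \<notin> E \<inter> visit i (l + n) j K"
    using AE_mono_S
  proof eventually_elim
    case (elim \<omega>)
    then have "S l \<omega> \<le> S (l + n) \<omega>" by (simp add: mono_def)
    show ?case
    proof
      assume "\<omega> \<in> E \<inter> visit i (l + n) j K"
      with assms(1) have "S l \<omega> = s" "S (l + n) \<omega> = K"
        by (auto simp: visit_def)
      with \<open>S l \<omega> \<le> S (l + n) \<omega>\<close> assms(3) show False by simp
    qed
  qed
qed (intro sets.Int assms(2) sets_visit)

lemma measure_past_Int_visit_add:
  assumes E: "past_event i l E" "E \<subseteq> visit i l a s"
  shows "measure (M i) (E \<inter> visit i (l + n) j K) =
    (if s \<le> K then measure (M i) E * mpow q n (K - s) a j else 0)"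
proof (induction n arbitrary: j K)
  case 0
  show ?case
  proof (cases "j = a \<and> K = s")
    case True
    then have "j = a" "K = s" by auto
    moreover from E(2) have "E \<inter> visit i l a s = E"
      by (auto simp: visit_def)
    ultimately show ?thesis
      by (simp add: mId_def fun_diff_self)
  next
    case False
    with E(2) have "E \<inter> visit i l j K = {}"
      by (auto simp: visit_def)
    moreover have "mId (K - s) a j = 0" if "s \<le> K"
      using False diff_eq_0_fun_iff[OF that] unfolding mId_def by auto
    ultimately show ?thesis
      by simp
  qed
next
  case (Suc n)
  show ?case
  proof (cases "s \<le> K")
    case False
    then show ?thesis
      using measure_Int_visit_eq_0_if_not_le[OF E(2) sets_past_event[OF E(1)] False, of "Suc n" j] by simp
  next
    case True
    have past: "past_event i (l + n) E"
      using E(1) by (rule past_event_mono) simp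
    define F where "F y z = (\<Sum>m\<in>UNIV. mpow q n y a m * q z m j)" for y z
    have vanish: "measure (M i) (E \<inter> visit i (l + n) m y) = 0" if "\<not> s \<le> y" for m y
      using measure_Int_visit_eq_0_if_not_le[OF E(2) sets_past_event[OF E(1)] that] .
    have "measure (M i) (E \<inter> visit i (l + Suc n) j K) =
        (\<Sum>m\<in>UNIV. \<Sum>y\<in>{y. y \<le> K}. q (K - y) m j * measure (M i) (E \<inter> visit i (l + n) m y))"
      using measure_past_Int_visit_Suc[OF past] by simp
    also have "\<dots> = (\<Sum>m\<in>UNIV. \<Sum>y\<in>{y. s \<le> y \<and> y \<le> K}. q (K - y) m j * measure (M i) (E \<inter> visit i (l + n) m y))"
    proof (rule sum.cong[OF refl], rule sum.mono_neutral_right)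
      fix m
      show "\<forall>y\<in>{y. y \<le> K} - {y. s \<le> y \<and> y \<le> K}. q (K - y) m j * measure (M i) (E \<inter> visit i (l + n) m y) = 0"
      proof
        fix y assume "y \<in> {y. y \<le> K} - {y. s \<le> y \<and> y \<le> K}"
        then have "\<not> s \<le> y" by blast
        then show "q (K - y) m j * measure (M i) (E \<inter> visit i (l + n) m y) = 0"
          by (simp add: vanish)
      qed
    qed (auto simp: finite_Collect_le_fun)
    also have "\<dots> = measure (M i) E * (\<Sum>y\<in>{y. s \<le> y \<and> y \<le> K}. F (y - s) (K - y))"
      by (simp add: Suc.IH F_def sum_distrib_left sum.swap[of _ UNIV] ac_simps)
    also have "\<dots> = measure (M i) E * (\<Sum>y\<in>{y. y \<le> K - s}. F y (K - s - y))"
      by (simp add: sum_Collect_le_fun_shift[OF True])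
    also have "\<dots> = measure (M i) E * mpow q (Suc n) (K - s) a j"
      by (simp add: F_def mpow_Suc_right mconv_apply del: mpow.simps(2))
    finally show ?thesis
      using True by simp
  qed
qed

lemma mpow_eq_measure_visit: "mpow q n k i j = measure (M i) (visit i n j k)"
proof -
  have "measure (M i) (visit i 0 i (\<lambda>_. 0) \<inter> visit i (0 + n) j k) =
      (if (\<lambda>_. 0) \<le> k then measure (M i) (visit i 0 i (\<lambda>_. 0)) * mpow q n (k - (\<lambda>_. 0)) i j else 0)"
    by (rule measure_past_Int_visit_add[OF past_event_visit subset_refl])
  then have "measure (M i) (visit i 0 i (\<lambda>_. 0) \<inter> visit i n j k) = mpow q n k i j"
    by (simp add: measure_visit_0 mId_def le_fun_def)
  moreover have "AE \<omega> in M i. \<omega> \<in> visit i 0 i (\<lambda>_. 0) \<inter> visit i n j k \<longleftrightarrow> \<omega> \<in> visit i n j k"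
    using AE_start by eventually_elim (auto simp: visit_def)
  then have "measure (M i) (visit i 0 i (\<lambda>_. 0) \<inter> visit i n j k) = measure (M i) (visit i n j k)"
    by (rule measure_eq_AE) auto
  ultimately show ?thesis by simp
qed

definition first_visit :: "'e \<Rightarrow> 'e \<Rightarrow> nat \<Rightarrow> ('d \<Rightarrow> nat) \<Rightarrow> 'a set" where
  "first_visit i j l x =
     {\<omega> \<in> space (M i). J l \<omega> = j \<and> (\<forall>l'. 1 \<le> l' \<and> l' < l \<longrightarrow> J l' \<omega> \<noteq> j) \<and> S l \<omega> = x}"

lemma sets_first_visit [measurable]: "first_visit i j l x \<in> sets (M i)"
  unfolding first_visit_def by measurable

lemma past_event_first_visit: "past_event i l (first_visit i j l x)"
  unfolding past_event_def by (simp add: sets_first_visit) (auto simp: first_visit_def)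

lemma first_visit_subset_visit: "first_visit i j l x \<subseteq> visit i l j x"
  by (auto simp: first_visit_def visit_def)

lemma first_visit_unique:
  assumes "\<omega> \<in> first_visit i j l x" "\<omega> \<in> first_visit i j l' x'" "1 \<le> l" "1 \<le> l'"
  shows "l = l' \<and> x = x'"
proof -
  have "\<not> l < l'" "\<not> l' < l"
    using assms by (auto simp: first_visit_def)
  then have "l = l'" by simp
  with assms show ?thesis by (simp add: first_visit_def)
qed

lemma measure_first_visit_eq_0:
  assumes "mt_norm x < l"
  shows "measure (M i) (first_visit i j l x) = 0"
proof (rule measure_eq_0_if_AE_notin)
  show "AE \<omega> in M i. \<omega> \<notin> first_visit i j l x"
    using AE_le_mt_norm_S
  proof eventually_elim
    case (elim \<omega>)
    show ?case
      using elim[rule_format, of l] assms by (auto simp: first_visit_def)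
  qed
qed simp

lemma measure_first_visit_mult_mpow_eq_0:
  assumes "x \<le> k" "mt_norm k < l + r"
  shows "measure (M i) (first_visit i j l x) * mpow q r (k - x) j j' = 0"
proof -
  have "mt_norm x < l \<or> mt_norm (k - x) < r"
    using assms mt_norm_diff[OF assms(1)] mt_norm_mono[OF assms(1)] by arith
  then show ?thesis
    by (auto simp: measure_first_visit_eq_0 mpow_eq_0_if_mt_norm_less kernel_at_0_eq_0)
qed

lemma first_passage_eq_sum_first_visit:
  assumes "mt_norm x \<le> N"
  shows "first_passage M J S x i j = (\<Sum>l=1..N. measure (M i) (first_visit i j l x))"
  unfolding first_passage_def
proof (rule finite_measure.measure_eq_sum_AE_partition[OF finite_measure_M])
  show "disjoint_family_on (\<lambda>l. first_visit i j l x) {1..N}"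
    unfolding disjoint_family_on_def using first_visit_unique by fastforce
  show "AE \<omega> in M i. \<omega> \<in> {\<omega> \<in> space (M i). \<exists>l\<ge>1. J l \<omega> = j \<and> (\<forall>l'. 1 \<le> l' \<and> l' < l \<longrightarrow> J l' \<omega> \<noteq> j) \<and> S l \<omega> = x}
      \<longrightarrow> (\<exists>l\<in>{1..N}. \<omega> \<in> first_visit i j l x)"
    using AE_le_mt_norm_S
  proof eventually_elim
    case (elim \<omega>)
    show ?case
    proof
      assume "\<omega> \<in> {\<omega> \<in> space (M i). \<exists>l\<ge>1. J l \<omega> = j \<and> (\<forall>l'. 1 \<le> l' \<and> l' < l \<longrightarrow> J l' \<omega> \<noteq> j) \<and> S l \<omega> = x}"
      then obtain l where "1 \<le> l" "\<omega> \<in> first_visit i j l x"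
        by (auto simp: first_visit_def)
      moreover have "l \<le> N"
        using elim[rule_format, of l] \<open>\<omega> \<in> first_visit i j l x\<close> assms by (simp add: first_visit_def)
      ultimately show "\<exists>l\<in>{1..N}. \<omega> \<in> first_visit i j l x" by auto
    qed
  qed
qed (auto simp: first_visit_def)

lemma AE_visit_imp_first_visit:
  assumes "1 \<le> n"
  shows "AE \<omega> in M i. \<omega> \<in> visit i n j k \<longrightarrow> (\<exists>l\<in>{1..n}. \<exists>x\<le>k. \<omega> \<in> first_visit i j l x)"
  using AE_mono_S
proof eventually_elim
  case (elim \<omega>)
  show ?case
  proof
    assume \<omega>: "\<omega> \<in> visit i n j k"
    define l where "l = (LEAST l. 1 \<le> l \<and> J l \<omega> = j)"
    have "1 \<le> n \<and> J n \<omega> = j"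
      using \<omega> assms by (simp add: visit_def)
    then have l: "1 \<le> l \<and> J l \<omega> = j" "l \<le> n"
      unfolding l_def by (rule LeastI, rule Least_le)
    have "\<forall>l'. 1 \<le> l' \<and> l' < l \<longrightarrow> J l' \<omega> \<noteq> j"
      unfolding l_def using not_less_Least by blast
    with l \<omega> have "\<omega> \<in> first_visit i j l (S l \<omega>)"
      by (simp add: first_visit_def visit_def)
    moreover have "S l \<omega> \<le> k"
      using elim l(2) \<omega> by (auto simp: mono_def visit_def)
    ultimately show "\<exists>l\<in>{1..n}. \<exists>x\<le>k. \<omega> \<in> first_visit i j l x"
      using l by auto
  qed
qed

text \<open>The strong Markov property at the first passage to \<open>j\<close> is obtained by applying the Markov
  property at each fixed step \<open>l\<close> to the past event \<open>first_visit i j l x\<close>.\<close>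
lemma measure_visit_eq_sum_first_visit:
  assumes "1 \<le> n"
  shows "measure (M i) (visit i n j k) =
    (\<Sum>l=1..n. \<Sum>x\<in>{x. x \<le> k}. measure (M i) (first_visit i j l x) * mpow q (n - l) (k - x) j j)"
proof -
  define C where "C h = first_visit i j (fst h) (snd h) \<inter> visit i (fst h + (n - fst h)) j k" for h
  have "measure (M i) (visit i n j k) = (\<Sum>h\<in>{1..n} \<times> {x. x \<le> k}. measure (M i) (C h))"
  proof (rule finite_measure.measure_eq_sum_AE_partition[OF finite_measure_M])
    show "disjoint_family_on C ({1..n} \<times> {x. x \<le> k})"
      unfolding disjoint_family_on_def C_def using first_visit_unique by (fastforce simp: prod_eq_iff)
    show "AE \<omega> in M i. \<omega> \<in> visit i n j k \<longrightarrow> (\<exists>h\<in>{1..n} \<times> {x. x \<le> k}. \<omega> \<in> C h)"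
      using AE_visit_imp_first_visit[OF assms, of i j k]
    proof eventually_elim
      case (elim \<omega>)
      show ?case
      proof
        assume "\<omega> \<in> visit i n j k"
        with elim obtain l x where "l \<in> {1..n}" "x \<le> k" "\<omega> \<in> first_visit i j l x"
          by auto
        with \<open>\<omega> \<in> visit i n j k\<close> show "\<exists>h\<in>{1..n} \<times> {x. x \<le> k}. \<omega> \<in> C h"
          by (intro bexI[of _ "(l, x)"]) (auto simp: C_def)
      qed
    qed
  qed (auto simp: C_def finite_Collect_le_fun visit_def)
  also have "\<dots> = (\<Sum>l=1..n. \<Sum>x\<in>{x. x \<le> k}. measure (M i) (C (l, x)))"
    by (simp add: sum.cartesian_product)
  also have "\<dots> = (\<Sum>l=1..n. \<Sum>x\<in>{x. x \<le> k}. measure (M i) (first_visit i j l x) * mpow q (n - l) (k - x) j j)"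
  proof (intro sum.cong refl)
    fix l x assume "x \<in> {x. x \<le> k}"
    then show "measure (M i) (C (l, x)) = measure (M i) (first_visit i j l x) * mpow q (n - l) (k - x) j j"
      using measure_past_Int_visit_add[OF past_event_first_visit first_visit_subset_visit]
      by (simp add: C_def)
  qed
  finally show ?thesis .
qed

lemma renewal_fun_eq_first_passage:
  "renewal_fun q k i j = mId k i j + mconv (first_passage M J S) (dg (renewal_fun q)) k i j"
proof -
  define N where "N = mt_norm k"
  define G where "G l x = measure (M i) (first_visit i j l x)" for l x
  have renewal_sum: "renewal_fun q y a b = (\<Sum>r\<le>N. mpow q r y a b)" if "y \<le> k" for y a b
    using renewal_fun_eq_sum[of q, OF kernel_at_0_eq_0, of y "Suc N" a b] mt_norm_mono[OF that]
    by (simp add: N_def lessThan_Suc_atMost)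
  have "renewal_fun q k i j = mId k i j + (\<Sum>n=1..N. mpow q n k i j)"
    by (simp add: renewal_sum atMost_atLeast0 sum.atLeast_Suc_atMost)
  also have "(\<Sum>n=1..N. mpow q n k i j) = (\<Sum>n=1..N. \<Sum>l=1..n. \<Sum>x\<in>{x. x \<le> k}. G l x * mpow q (n - l) (k - x) j j)"
    by (intro sum.cong refl) (simp add: mpow_eq_measure_visit measure_visit_eq_sum_first_visit G_def)
  also have "\<dots> = (\<Sum>x\<in>{x. x \<le> k}. \<Sum>n=1..N. \<Sum>l=1..n. G l x * mpow q (n - l) (k - x) j j)"
    by (simp add: sum.swap[of _ "{x. x \<le> k}"])
  also have "\<dots> = (\<Sum>x\<in>{x. x \<le> k}. \<Sum>l=1..N. \<Sum>r\<le>N. G l x * mpow q r (k - x) j j)"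
  proof (rule sum.cong[OF refl], rule sum_triangle_reindex)
    fix x l r assume "x \<in> {x. x \<le> k}" "N < l + r"
    then show "G l x * mpow q r (k - x) j j = 0"
      unfolding G_def N_def by (simp add: measure_first_visit_mult_mpow_eq_0)
  qed
  also have "\<dots> = mconv (first_passage M J S) (dg (renewal_fun q)) k i j"
    unfolding mconv_dg_right
  proof (intro sum.cong refl)
    fix x assume "x \<in> {x. x \<le> k}"
    then have "x \<le> k" "mt_norm x \<le> N"
      using mt_norm_mono by (auto simp: N_def)
    then show "(\<Sum>l=1..N. \<Sum>r\<le>N. G l x * mpow q r (k - x) j j) = first_passage M J S x i j * renewal_fun q (k - x) j j"
      using renewal_sum[of "k - x"] by (simp add: sum_product G_def first_passage_eq_sum_first_visit le_fun_def)
  qed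
  finally show ?thesis .
qed

end

theorem proposition10:
  fixes M :: "'e::finite \<Rightarrow> 'a measure"
    and J :: "nat \<Rightarrow> 'a \<Rightarrow> 'e"
    and S :: "nat \<Rightarrow> 'a \<Rightarrow> ('d::finite \<Rightarrow> nat)"
    and q :: "('d, 'e) mseq"
  assumes "MRC M J S q"
  shows "mconv_invertible (dg (renewal_fun q)) \<and>
    renewal_fun q = (\<lambda>k i j. mId k i j + mconv (first_passage M J S) (dg (renewal_fun q)) k i j) \<and>
    first_passage M J S = mconv (mminus (renewal_fun q) mId) (mconv_inv (dg (renewal_fun q)))"
proof -
  interpret markov_renewal_chain M J S q
    by (rule markov_renewal_chain.intro) (rule assms)
  have "dg (renewal_fun q) (\<lambda>_. 0) = mId (\<lambda>_::'d. 0)"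
    using renewal_fun_eq_sum[of q, OF kernel_at_0_eq_0, of "\<lambda>_. 0" 1] by (simp add: dg_def mId_def fun_eq_iff)
  then have invertible: "mconv_invertible (dg (renewal_fun q))"
    by (rule mconv_invertible_if_unit_at_0)
  have "mconv (first_passage M J S) (dg (renewal_fun q)) = mminus (renewal_fun q) mId"
    by (intro ext) (simp add: mminus_def renewal_fun_eq_first_passage)
  then have "first_passage M J S = mconv (mminus (renewal_fun q) mId) (mconv_inv (dg (renewal_fun q)))"
    using invertible by (rule eq_mconv_inv_if_mconv_eq)
  with invertible show ?thesis
    by (simp add: fun_eq_iff renewal_fun_eq_first_passage)
qed

end
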